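(* Let $p$ be a prime, $\mathbb{C}_p$ the field of complex $p$-adic numbers with norm $|\cdot|_p$, $a,b,c\in\mathbb{C}_p$ with $b\neq0$, $c\neq ab$, $f(x)=\frac{x+a}{bx+c}$ for $x\neq -c/b$. Fix a square root $\sqrt{(c-1)^2+4ab}$ and let $x_{1}=\frac{1-c+\sqrt{(c-1)^2+4ab}}{2b}$ (a fixed point of $f$). Assume $$\left|\frac{c-ab}{(bx_1+c)^2}\right|_p<1\qquad\text{and}\qquad\left|\frac{b}{bx_1+c}\right|_p<1,$$ and put $\delta_2=\left|\frac{bx_1+c}{b}\right|_p-1$. Then $$\bigcup_{\delta\ge 0,\ \delta\neq 1+\delta_2} S_\delta(x_1)\subset A(x_1).$$
   Context: $S_\delta(x_1)=\{x\in\mathbb{C}_p:|x-x_1|_p=\delta\}$ (so $S_0(x_1)=\{x_1\}$). The basin of attraction of a fixed point $x_0$ is $A(x_0)=\{y\in\mathbb{C}_p: f^n(y)\to x_0 \text{ as } n\to\infty\}$. *)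

theory Defs
  imports Complex_Main "HOL-Computational_Algebra.Computational_Algebra"
begin

text \<open>We characterise it axiomatically:
  a field of characteristic 0 with an absolute value N that is non-archimedean,
  restricts to the p-adic absolute value on the integers (hence on Q),
  is complete, algebraically closed, and in which the elements algebraic over Q
  are dense. These properties determine (C_p, |.|_p) up to isometric isomorphism.\<close>

definition is_Cp_abs :: "nat \<Rightarrow> ('a::field_char_0 \<Rightarrow> real) \<Rightarrow> bool" where
  "is_Cp_abs p N \<longleftrightarrow>
     prime p \<and>
     (\<forall>x. N x \<ge> 0) \<and> (\<forall>x. N x = 0 \<longleftrightarrow> x = 0) \<and>
     (\<forall>x y. N (x * y) = N x * N y) \<and>
     (\<forall>x y. N (x + y) \<le> max (N x) (N y)) \<and>
     (\<forall>n::int. n \<noteq> 0 \<longrightarrow> N (of_int n) = real p powr (- real (multiplicity (int p) n))) \<and>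
     (\<forall>u::nat \<Rightarrow> 'a. (\<forall>e>0. \<exists>M. \<forall>m\<ge>M. \<forall>n\<ge>M. N (u m - u n) < e)
          \<longrightarrow> (\<exists>L. \<forall>e>0. \<exists>M. \<forall>n\<ge>M. N (u n - L) < e)) \<and>
     (\<forall>P::'a poly. degree P > 0 \<longrightarrow> (\<exists>x. poly P x = 0)) \<and>
     (\<forall>x. \<forall>e>0. \<exists>y. (\<exists>Q::int poly. Q \<noteq> 0 \<and> poly (map_poly of_int Q) y = 0) \<and> N (x - y) < e)"

definition sphere_N :: "('a::field \<Rightarrow> real) \<Rightarrow> 'a \<Rightarrow> real \<Rightarrow> 'a set" where
  "sphere_N N x1 \<delta> = {x. N (x - x1) = \<delta>}"

text \<open>The map f(x) = (x+a)/(bx+c); only meaningful where bx+c \<noteq> 0.\<close>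
definition mob :: "'a::field \<Rightarrow> 'a \<Rightarrow> 'a \<Rightarrow> 'a \<Rightarrow> 'a" where
  "mob a b c x = (x + a) / (b * x + c)"

definition basin :: "('a::field \<Rightarrow> real) \<Rightarrow> 'a \<Rightarrow> 'a \<Rightarrow> 'a \<Rightarrow> 'a \<Rightarrow> 'a set" where
  "basin N a b c x0 = {y. (\<forall>n. b * ((mob a b c ^^ n) y) + c \<noteq> 0) \<and>
       (\<forall>e>0. \<exists>M. \<forall>n\<ge>M. N ((mob a b c ^^ n) y - x0) < e)}"

end

theory Submission
  imports Defs
begin

text \<open>With \<open>q = b x1 + c\<close>, \<open>A = (c - a b)/q\<^sup>2\<close> (the multiplier \<open>f'(x1)\<close>) and \<open>B = b/q\<close>
  one has \<open>f(x) - x1 = A (x - x1) / (1 + B (x - x1))\<close>. Since \<open>x1 - 1/B\<close> is the pole \<open>-c/b\<close>,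
  the excluded radius \<open>1 + \<delta>2 = |1/B|\<close> is the distance from \<open>x1\<close> to the pole. By the
  ultrametric inequality \<open>|1 + B (x - x1)|\<close> is \<open>1\<close> inside that sphere and \<open>|B| |x - x1|\<close>
  outside it. So inside, \<open>|f(x) - x1| = |A| |x - x1|\<close> and the orbit converges geometrically;
  outside, \<open>|f(x) - x1| = |A|/|B| < 1/|B|\<close>, and one step lands inside.\<close>

locale nonarch_abs =
  fixes N :: "'a::field \<Rightarrow> real"
  assumes nonneg: "\<And>x. N x \<ge> 0"
    and zero_iff: "\<And>x. N x = 0 \<longleftrightarrow> x = 0"
    and mult: "\<And>x y. N (x * y) = N x * N y"
    and ultrametric: "\<And>x y. N (x + y) \<le> max (N x) (N y)"
begin

lemma zero [simp]: "N 0 = 0"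
  using zero_iff by simp

lemma one [simp]: "N 1 = 1"
  using mult[of 1 1] zero_iff[of 1] by simp

lemma minus [simp]: "N (- x) = N x"
proof -
  have "N (-1) * N (-1) = 1"
    using mult[of "-1" "-1"] by simp
  with nonneg[of "-1"] have "N (-1) = 1"
    by (metis abs_of_nonneg abs_square_eq_1 power2_eq_square)
  then show ?thesis
    using mult[of "-1" x] by simp
qed

lemma divide: "N (x / y) = N x / N y"
proof (cases "y = 0")
  case False
  then show ?thesis
    using mult[of "x / y" y] zero_iff[of y] by (simp add: field_simps)
qed simp

lemma one_plus_of_less_one: "N v < 1 \<Longrightarrow> N (1 + v) = 1"
  using ultrametric[of 1 v] ultrametric[of "1 + v" "- v"] by (simp add: max_def split: if_splits)

lemma one_plus_of_greater_one: "N v > 1 \<Longrightarrow> N (1 + v) = N v"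
  using ultrametric[of 1 v] ultrametric[of "1 + v" "- 1"] by (simp add: max_def split: if_splits)

end

lemma is_Cp_abs_nonarch_abs: "is_Cp_abs p N \<Longrightarrow> nonarch_abs N"
  unfolding is_Cp_abs_def nonarch_abs_def by blast

lemma quadratic_root_mob_fixed:
  fixes a b c s :: "'a::field_char_0"
  assumes "b \<noteq> 0" and "s\<^sup>2 = (c - 1)\<^sup>2 + 4 * a * b" and "x1 = (1 - c + s) / (2 * b)"
  shows "x1 * (b * x1 + c) = x1 + a"
proof -
  have "s = 2 * b * x1 + (c - 1)"
    using assms(1,3) by (simp add: field_simps)
  with assms(2) have "4 * b * (x1 * (b * x1 + c) - x1) = 4 * b * a"
    by (simp add: algebra_simps power2_eq_square)
  with assms(1) have "x1 * (b * x1 + c) - x1 = a"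
    by simp
  then show ?thesis
    by (simp add: algebra_simps)
qed

lemma mob_fixed_point_factor:
  assumes "x1 * (b * x1 + c) = x1 + a"
  shows "c - a * b = (1 - b * x1) * (b * x1 + (c::'a::field))"
proof -
  have "b * (x1 * (b * x1 + c)) = b * (x1 + a)"
    using assms by simp
  then show ?thesis
    by (simp add: algebra_simps)
qed

lemma mob_fixed_point_pole_ne:
  assumes "x1 * (b * x1 + c) = x1 + a" and "c \<noteq> a * b"
  shows "b * x1 + (c::'a::field) \<noteq> 0"
  using mob_fixed_point_factor[OF assms(1)] assms(2) by auto

lemma mob_denominator_eq:
  assumes "b * x1 + c \<noteq> (0::'a::field)"
  shows "b * x + c = (b * x1 + c) * (1 + b / (b * x1 + c) * (x - x1))"
  using assms by (simp add: field_simps)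

lemma mob_minus_fixed_point:
  fixes a b c x1 :: "'a::field"
  assumes fixed: "x1 * (b * x1 + c) = x1 + a" and pole_ne: "b * x1 + c \<noteq> 0"
    and "b * x + c \<noteq> 0"
  shows "mob a b c x - x1 = (c - a * b) / (b * x1 + c)\<^sup>2 * (x - x1) / (1 + b / (b * x1 + c) * (x - x1))"
proof -
  have "mob a b c x - x1 = (x + a - x1 * (b * x + c)) / (b * x + c)"
    using assms(3) by (simp add: mob_def field_simps)
  also have "x + a - x1 * (b * x + c) = (1 - b * x1) * (x - x1)"
    using fixed by (simp add: algebra_simps)
  also note mob_fixed_point_factor[OF fixed]
  ultimately show ?thesis
    using pole_ne mob_denominator_eq[OF pole_ne, of x] by (simp add: power2_eq_square)
qed

lemma in_basin_if_geometric_bound: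
  assumes "\<And>n. b * (mob a b c ^^ n) y + c \<noteq> 0"
    and "\<And>n. N ((mob a b c ^^ n) y - x0) \<le> r ^ n * d"
    and "0 \<le> r" and "r < 1"
  shows "y \<in> basin N a b c x0"
proof -
  have "(\<lambda>n. r ^ n * d) \<longlonglongrightarrow> 0"
    using assms(3,4) by (simp add: LIMSEQ_power_zero tendsto_mult_left_zero)
  then have "\<exists>M. \<forall>n\<ge>M. r ^ n * d < e" if "e > 0" for e
    using that by (metis LIMSEQ_iff abs_less_iff diff_zero real_norm_def)
  then have "\<exists>M. \<forall>n\<ge>M. N ((mob a b c ^^ n) y - x0) < e" if "e > 0" for e
    using that assms(2) by (meson order.strict_trans1)
  then show ?thesis
    unfolding basin_def using assms(1) by blast
qed

lemma in_basin_if_mob_in_basin: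
  assumes "b * y + c \<noteq> 0" and "mob a b c y \<in> basin N a b c x0"
  shows "y \<in> basin N a b c x0"
proof -
  have orbit_shift: "(mob a b c ^^ Suc n) y = (mob a b c ^^ n) (mob a b c y)" for n
    by (simp add: funpow_Suc_right del: funpow.simps)
  have "b * (mob a b c ^^ n) y + c \<noteq> 0" for n
  proof (cases n)
    case (Suc k)
    then show ?thesis
      using assms(2) orbit_shift[of k] unfolding basin_def by simp
  qed (use assms(1) in simp)
  moreover have "\<exists>M. \<forall>n\<ge>M. N ((mob a b c ^^ n) y - x0) < e" if "e > 0" for e
  proof -
    obtain M where "\<forall>n\<ge>M. N ((mob a b c ^^ n) (mob a b c y) - x0) < e"
      using assms(2) \<open>e > 0\<close> unfolding basin_def by blast
    then have "\<forall>n\<ge>Suc M. N ((mob a b c ^^ n) y - x0) < e"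
      by (metis Suc_le_D Suc_le_mono orbit_shift)
    then show ?thesis
      by blast
  qed
  ultimately show ?thesis
    unfolding basin_def by blast
qed

locale nonarch_mob_fixed_point = nonarch_abs N
  for N :: "'a::field \<Rightarrow> real" +
  fixes a b c x1 :: 'a
  assumes fixed: "x1 * (b * x1 + c) = x1 + a"
    and pole_ne: "b * x1 + c \<noteq> 0"
begin

abbreviation multiplier :: 'a where
  "multiplier \<equiv> (c - a * b) / (b * x1 + c)\<^sup>2"

abbreviation inv_pole_offset :: 'a where
  "inv_pole_offset \<equiv> b / (b * x1 + c)"

lemma mob_step_inside:
  assumes "N inv_pole_offset * N (x - x1) < 1"
  shows "b * x + c \<noteq> 0" and "N (mob a b c x - x1) = N multiplier * N (x - x1)"
proof -
  have "N (inv_pole_offset * (x - x1)) < 1"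
    using assms by (simp only: mult)
  then have unit: "N (1 + inv_pole_offset * (x - x1)) = 1"
    by (rule one_plus_of_less_one)
  then show "b * x + c \<noteq> 0"
    using mob_denominator_eq[OF pole_ne, of x] pole_ne zero_iff by force
  then show "N (mob a b c x - x1) = N multiplier * N (x - x1)"
    using unit by (simp add: mob_minus_fixed_point[OF fixed pole_ne] divide mult)
qed

lemma mob_step_outside:
  assumes "N inv_pole_offset * N (x - x1) > 1"
  shows "b * x + c \<noteq> 0" and "N (mob a b c x - x1) = N multiplier / N inv_pole_offset"
proof -
  have "N (inv_pole_offset * (x - x1)) > 1"
    using assms by (simp only: mult)
  then have large: "N (1 + inv_pole_offset * (x - x1)) = N inv_pole_offset * N (x - x1)"
    by (simp only: one_plus_of_greater_one mult)
  show pole_avoided: "b * x + c \<noteq> 0"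
    using large assms mob_denominator_eq[OF pole_ne, of x] pole_ne zero_iff by force
  have "N (mob a b c x - x1) = N (multiplier * (x - x1)) / N (1 + inv_pole_offset * (x - x1))"
    unfolding mob_minus_fixed_point[OF fixed pole_ne pole_avoided] by (rule divide)
  also have "\<dots> = N multiplier * N (x - x1) / (N inv_pole_offset * N (x - x1))"
    unfolding large by (simp only: mult)
  moreover have "N (x - x1) \<noteq> 0"
    using assms by auto
  ultimately show "N (mob a b c x - x1) = N multiplier / N inv_pole_offset"
    by simp
qed

lemma mob_orbit_inside:
  assumes "N multiplier < 1" and "N inv_pole_offset * N (y - x1) < 1"
  shows "N ((mob a b c ^^ n) y - x1) = N multiplier ^ n * N (y - x1)"
    and "b * (mob a b c ^^ n) y + c \<noteq> 0"
proof -
  have inside: "N inv_pole_offset * (N multiplier ^ k * N (y - x1)) < 1" for k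
  proof -
    have "N multiplier ^ k * N (y - x1) \<le> N (y - x1)"
      using assms(1) nonneg by (simp add: mult_left_le_one_le power_le_one)
    then show ?thesis
      using assms(2) nonneg by (metis mult_left_mono order.strict_trans1)
  qed
  show dist: "N ((mob a b c ^^ n) y - x1) = N multiplier ^ n * N (y - x1)" for n
  proof (induction n)
    case (Suc n)
    then show ?case
      using inside[of n] mob_step_inside(2) by simp
  qed simp
  show "b * (mob a b c ^^ n) y + c \<noteq> 0"
    using inside[of n] dist[of n] mob_step_inside(1) by simp
qed

lemma in_basin_off_pole_sphere:
  assumes "N multiplier < 1" and "N inv_pole_offset * N (y - x1) \<noteq> 1"
  shows "y \<in> basin N a b c x1"
proof (cases "N inv_pole_offset * N (y - x1) < 1")
  case True
  with assms(1) show ?thesis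
    using mob_orbit_inside nonneg by (intro in_basin_if_geometric_bound) auto
next
  case False
  with assms(2) have outside: "N inv_pole_offset * N (y - x1) > 1"
    by simp
  then have "N inv_pole_offset > 0"
    using nonneg by (metis less_eq_real_def mult_not_zero not_one_less_zero)
  then have "N inv_pole_offset * N (mob a b c y - x1) < 1"
    using mob_step_outside(2)[OF outside] assms(1) by simp
  with assms(1) have "mob a b c y \<in> basin N a b c x1"
    using mob_orbit_inside nonneg by (intro in_basin_if_geometric_bound) auto
  then show ?thesis
    using in_basin_if_mob_in_basin mob_step_outside(1)[OF outside] by blast
qed

end

theorem theorem3p7:
  fixes p :: nat and N :: "'a::field_char_0 \<Rightarrow> real" and a b c s :: 'a
  assumes "is_Cp_abs p N"
    and "b \<noteq> 0" and "c \<noteq> a * b"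
    and "s^2 = (c - 1)^2 + 4 * a * b"
    and "x1 = (1 - c + s) / (2 * b)"
    and "N ((c - a * b) / (b * x1 + c)^2) < 1"
    and "N (b / (b * x1 + c)) < 1"
    and "\<delta>2 = N ((b * x1 + c) / b) - 1"
  shows "(\<Union>\<delta>\<in>{\<delta>. \<delta> \<ge> 0 \<and> \<delta> \<noteq> 1 + \<delta>2}. sphere_N N x1 \<delta>) \<subseteq> basin N a b c x1"
proof
  have fixed: "x1 * (b * x1 + c) = x1 + a"
    using quadratic_root_mob_fixed assms(2,4,5) by blast
  interpret nonarch_mob_fixed_point N a b c x1
    using is_Cp_abs_nonarch_abs[OF assms(1)] fixed mob_fixed_point_pole_ne[OF fixed assms(3)]
    by (simp add: nonarch_mob_fixed_point_def nonarch_mob_fixed_point_axioms_def)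
  have pole_dist: "1 + \<delta>2 = 1 / N inv_pole_offset"
    using assms(8) by (simp add: divide)
  have "N inv_pole_offset \<noteq> 0"
    using assms(2) pole_ne by (simp add: zero_iff)
  fix y
  assume "y \<in> (\<Union>\<delta>\<in>{\<delta>. \<delta> \<ge> 0 \<and> \<delta> \<noteq> 1 + \<delta>2}. sphere_N N x1 \<delta>)"
  then have "N inv_pole_offset * N (y - x1) \<noteq> 1"
    using \<open>N inv_pole_offset \<noteq> 0\<close> unfolding sphere_N_def pole_dist by (auto simp: field_simps)
  then show "y \<in> basin N a b c x1"
    using in_basin_off_pole_sphere assms(6) by blast
qed

end
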